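(* Let $P>0$, $v\ge2$, and let $\Gamma'_{T_1},\Gamma'_{T_2},\Gamma'_R,\Gamma''_{T_1},\Gamma''_{T_2}\ge0$ with $\Gamma'_{T_1}=\Gamma'_{T_2}$ and $\Gamma''_{T_1}=\Gamma''_{T_2}$. Set $B_i=\Gamma''_{T_i}+2\Gamma'_{T_i}+1$ and $C_i=(\Gamma'_R+1)(\Gamma'_{T_i}+1)$ for $i=1,2$. For $(\omega,D)\in(0,1)^2$ let $\bar\gamma_1=P(1-D)^{-v}$, $\bar\gamma_2=PD^{-v}$ and $$\mathcal L(\omega,D)=\frac{B_2-B_1}{\bar\gamma_2}+\frac{B_1+C_1}{\omega\bar\gamma_2}+\frac{B_1-B_2}{\bar\gamma_1}+\frac{B_2+C_2}{(1-\omega)\bar\gamma_1}.$$ Then $(\omega,D)=(1/2,1/2)$ is a global minimizer of $\mathcal L$ over $(0,1)^2$.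
   Context: $\mathcal L$ is (up to a positive factor) the high-SNR asymptotic protocol outage probability of a three-phase two-way relay network as a function of the relay power-allocation coefficient $\omega$ and relay position $D$ (the relay lies on the segment between terminals at normalized distance $1$, at distance $1-D$ from $T_1$ and $D$ from $T_2$); $v$ is the path-loss exponent and $\Gamma'_N,\Gamma''_N$ are the first and second moments of the interference power at node $N$. *)

theory Defs
  imports Complex_Main
begin

text \<open>High-SNR asymptotic outage objective. Parameters: P, v, G1' G2' (first moments at T1,T2),
  GR' (first moment at R), G1'' G2'' (second moments at T1,T2).\<close>

definition outage_L ::
  "real \<Rightarrow> real \<Rightarrow> real \<Rightarrow> real \<Rightarrow> real \<Rightarrow> real \<Rightarrow> real \<Rightarrow> real \<Rightarrow> real \<Rightarrow> real" where
  "outage_L P v G1' G2' GR' G1'' G2'' \<omega> D =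
    (let B1 = G1'' + 2 * G1' + 1;
         B2 = G2'' + 2 * G2' + 1;
         C1 = (GR' + 1) * (G1' + 1);
         C2 = (GR' + 1) * (G2' + 1);
         g1 = P * (1 - D) powr (- v);
         g2 = P * D powr (- v)
     in (B2 - B1) / g2 + (B1 + C1) / (\<omega> * g2) + (B1 - B2) / g1 + (B2 + C2) / ((1 - \<omega>) * g1))"

end

theory Submission
  imports Defs "HOL-Analysis.Analysis"
begin

text \<open>With symmetric interference statistics the objective factors as
  \<open>K/P \<cdot> (D\<^sup>v/\<omega> + (1-D)\<^sup>v/(1-\<omega>))\<close> with \<open>K \<ge> 0\<close>. Writing \<open>a = D\<^bsup>v/2\<^esup>\<close> and
  \<open>b = (1-D)\<^bsup>v/2\<^esup>\<close>, the Cauchy-Schwarz (Titu) inequality gives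
  \<open>a\<^sup>2/\<omega> + b\<^sup>2/(1-\<omega>) \<ge> (a+b)\<^sup>2\<close>, and since \<open>x \<mapsto> x\<^bsup>v/2\<^esup>\<close> is convex for \<open>v \<ge> 2\<close>,
  \<open>a + b \<ge> 2 (1/2)\<^bsup>v/2\<^esup>\<close>; the resulting bound \<open>4 (1/2)\<^sup>v\<close> is the value at \<open>(1/2, 1/2)\<close>.\<close>

lemma sum_square_le_weighted_squares:
  fixes a b w :: real
  assumes "0 < w" "w < 1"
  shows "(a + b)\<^sup>2 \<le> a\<^sup>2 / w + b\<^sup>2 / (1 - w)"
proof -
  have "a\<^sup>2 / w + b\<^sup>2 / (1 - w) - (a + b)\<^sup>2 = (a * (1 - w) - b * w)\<^sup>2 / (w * (1 - w))"
    using assms by (simp add: field_simps power2_eq_square)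
  moreover have "(a * (1 - w) - b * w)\<^sup>2 / (w * (1 - w)) \<ge> 0"
    using assms by simp
  ultimately show ?thesis by linarith
qed

lemma powr_midpoint_le:
  fixes x y p :: real
  assumes "p \<ge> 1" "x > 0" "y > 0"
  shows "2 * ((x + y) / 2) powr p \<le> x powr p + y powr p"
proof -
  have "((1 - 1/2) *\<^sub>R x + (1/2) *\<^sub>R y) powr p \<le> (1 - 1/2) * x powr p + (1/2) * y powr p"
    using convex_onD[OF powr_convex[OF assms(1)], of "1/2" x y] assms by simp
  moreover have "(1 - 1/2) *\<^sub>R x + (1/2) *\<^sub>R y = (x + y) / 2"
    by simp
  ultimately show ?thesis by (simp add: add_divide_distrib)
qed

lemma powr_half_exponent_squared:
  fixes x v :: real
  shows "(x powr (v / 2))\<^sup>2 = x powr v"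
  by (simp add: power2_eq_square powr_add[symmetric])

lemma midpoint_le_weighted_powers:
  fixes v w D :: real
  assumes "v \<ge> 2" "0 < w" "w < 1" "0 < D" "D < 1"
  shows "4 * (1/2) powr v \<le> D powr v / w + (1 - D) powr v / (1 - w)"
proof -
  define a b where "a = D powr (v / 2)" and "b = (1 - D) powr (v / 2)"
  have "2 * (1/2) powr (v / 2) \<le> a + b"
    using powr_midpoint_le[of "v / 2" D "1 - D"] assms unfolding a_def b_def by simp
  then have "(2 * (1/2) powr (v / 2))\<^sup>2 \<le> (a + b)\<^sup>2"
    by (intro power_mono) auto
  also have "\<dots> \<le> a\<^sup>2 / w + b\<^sup>2 / (1 - w)"
    using sum_square_le_weighted_squares assms by simp
  finally show ?thesis
    unfolding a_def b_def power_mult_distrib powr_half_exponent_squared by simp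
qed

lemma outage_L_symmetric:
  fixes P v G' GR' G'' w D :: real
  assumes "P > 0" "0 < w" "w < 1" "0 < D" "D < 1"
  shows "outage_L P v G' G' GR' G'' G'' w D =
    (G'' + 2 * G' + 1 + (GR' + 1) * (G' + 1)) / P * (D powr v / w + (1 - D) powr v / (1 - w))"
  using assms by (simp add: outage_L_def Let_def powr_minus field_simps)

theorem corollary1:
  fixes P v G1' G2' GR' G1'' G2'' :: real
  assumes "P > 0" and "v \<ge> 2"
    and "G1' \<ge> 0" and "G2' \<ge> 0" and "GR' \<ge> 0" and "G1'' \<ge> 0" and "G2'' \<ge> 0"
    and "G1' = G2'" and "G1'' = G2''"
  shows "\<forall>\<omega> D. 0 < \<omega> \<and> \<omega> < 1 \<and> 0 < D \<and> D < 1 \<longrightarrow>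
           outage_L P v G1' G2' GR' G1'' G2'' (1/2) (1/2) \<le> outage_L P v G1' G2' GR' G1'' G2'' \<omega> D"
proof (intro allI impI)
  fix w D :: real
  assume range: "0 < w \<and> w < 1 \<and> 0 < D \<and> D < 1"
  then have bound: "4 * (1/2) powr v \<le> D powr v / w + (1 - D) powr v / (1 - w)"
    using midpoint_le_weighted_powers assms(2) by blast
  define K where "K = G1'' + 2 * G1' + 1 + (GR' + 1) * (G1' + 1)"
  have "K / P \<ge> 0"
    using assms unfolding K_def by simp
  then have "K / P * (4 * (1/2) powr v) \<le> K / P * (D powr v / w + (1 - D) powr v / (1 - w))"
    using bound by (metis mult_left_mono)
  moreover have "outage_L P v G1' G2' GR' G1'' G2'' (1/2) (1/2) = K / P * (4 * (1/2) powr v)"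
    using outage_L_symmetric[of P "1/2" "1/2" v G1' GR' G1''] assms(1,8,9)
    unfolding K_def by simp
  moreover have "outage_L P v G1' G2' GR' G1'' G2'' w D
      = K / P * (D powr v / w + (1 - D) powr v / (1 - w))"
    using outage_L_symmetric[of P w D v G1' GR' G1''] assms(1,8,9) range
    unfolding K_def by simp
  ultimately show "outage_L P v G1' G2' GR' G1'' G2'' (1/2) (1/2) \<le> outage_L P v G1' G2' GR' G1'' G2'' w D"
    by simp
qed

end
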